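(* Let $N \ge 2$ and consider $N$ electrons with positions $r = (r_1,\dots,r_N) \in \mathbb{R}^{3N}$, $r_i \in \mathbb{R}^3$, each carrying a fixed spin label $\rho_i \in \{\uparrow,\downarrow\}$. For a transposition $\tau$ of two indices $i \neq j$ with $\rho_i = \rho_j$, write $\tau r$ for the configuration obtained from $r$ by exchanging $r_i$ and $r_j$. Let $K \ge 1$, let $\gamma_1,\dots,\gamma_K \in \mathbb{R}$, let $\beta_1,\beta_2 \in \mathbb{R}\setminus\{0\}$, and let $\alpha^{(1)},\dots,\alpha^{(K)} : \mathbb{R}^{3N} \to \mathbb{R}^N$ be maps that are equivariant under exchange of same-spin electrons, i.e. for every transposition $\tau$ of two same-spin indices $i,j$ and every $r$, the vector $\alpha^{(k)}(\tau r)$ is obtained from $\alpha^{(k)}(r)$ by swapping its $i$-th and $j$-th entries. Define the Sortlet ansatz $$\Psi(r) = \exp[J_\beta(r)] \sum_{k=1}^K \Psi_{\alpha^{(k)}}(r)\, e^{-\gamma_k \sum_{j=1}^N |r_j|},$$ where $$J_\beta(r) = \sum_{i<j,\ \rho_i = \rho_j} \frac{-1}{4}\,\frac{\beta_1}{\beta_1^2 + |r_i - r_j|} + \sum_{i<j,\ \rho_i \ne \rho_j} \frac{-1}{2}\,\frac{\beta_2}{\beta_2^2 + |r_i - r_j|}$$ and $\Psi_\alpha$ denotes the sortlet defined in the context. Then $\Psi$ is antisymmetric under exchange of any two electrons with the same spin: $\Psi(\tau r) = -\Psi(r)$ for every $r \in \mathbb{R}^{3N}$ and every transposition $\tau$ of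 two same-spin indices.
   Context: Sortlet: for a map $\alpha = (\alpha_1,\dots,\alpha_N) : \mathbb{R}^{3N} \to \mathbb{R}^N$ and a configuration $r$ at which the values $\alpha_1(r),\dots,\alpha_N(r)$ are pairwise distinct, let $\pi_\alpha = \pi_{\alpha(r)}$ be the unique permutation of $\{1,\dots,N\}$ with $\alpha_{\pi_\alpha(1)}(r) < \alpha_{\pi_\alpha(2)}(r) < \dots < \alpha_{\pi_\alpha(N)}(r)$ (the permutation that sorts $\alpha(r)$), and set $$\Psi_\alpha(r) = \sigma(\pi_\alpha) \prod_{i=1}^{N-1} \big(\alpha_{\pi_\alpha(i+1)}(r) - \alpha_{\pi_\alpha(i)}(r)\big),$$ where $\sigma(\pi) \in \{+1,-1\}$ is the sign (parity) of the permutation $\pi$. At configurations where two values $\alpha_i(r)$ coincide, the product of consecutive sorted differences vanishes, and $\Psi_\alpha(r) = 0$. $|\cdot|$ denotes the Euclidean norm on $\mathbb{R}^3$. *)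

theory Defs
  imports "HOL-Analysis.Analysis" "HOL-Combinatorics.Permutations" "HOL-Combinatorics.Transposition"
begin

text \<open>Electron indices are 0,...,N-1. A configuration in R^(3N) is a map
  r :: nat => real^3 that vanishes at indices >= N.\<close>

definition config :: "nat \<Rightarrow> (nat \<Rightarrow> real^3) set" where
  "config N = {r. \<forall>i\<ge>N. r i = 0}"

definition swap_conf :: "nat \<Rightarrow> nat \<Rightarrow> (nat \<Rightarrow> real^3) \<Rightarrow> (nat \<Rightarrow> real^3)" where
  "swap_conf i j r = r \<circ> Transposition.transpose i j"

text \<open>The permutation sorting the values a 0, ..., a (N-1) (assumed pairwise distinct).\<close>
definition sort_perm :: "nat \<Rightarrow> (nat \<Rightarrow> real) \<Rightarrow> (nat \<Rightarrow> nat)" where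
  "sort_perm N a = (THE p. p permutes {0..<N} \<and> (\<forall>i. Suc i < N \<longrightarrow> a (p i) < a (p (Suc i))))"

definition sortlet :: "nat \<Rightarrow> (nat \<Rightarrow> real) \<Rightarrow> real" where
  "sortlet N a = (if inj_on a {0..<N}
     then of_int (sign (sort_perm N a)) *
          (\<Prod>i<N - 1. a (sort_perm N a (Suc i)) - a (sort_perm N a i))
     else 0)"

definition jastrow :: "nat \<Rightarrow> (nat \<Rightarrow> bool) \<Rightarrow> real \<Rightarrow> real \<Rightarrow> (nat \<Rightarrow> real^3) \<Rightarrow> real" where
  "jastrow N \<rho> \<beta>1 \<beta>2 r =
     (\<Sum>(i,j)\<in>{(i,j). i < j \<and> j < N \<and> \<rho> i = \<rho> j}.
        (-1/4) * (\<beta>1 / (\<beta>1^2 + norm (r i - r j))))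
   + (\<Sum>(i,j)\<in>{(i,j). i < j \<and> j < N \<and> \<rho> i \<noteq> \<rho> j}.
        (-1/2) * (\<beta>2 / (\<beta>2^2 + norm (r i - r j))))"

definition sortlet_ansatz ::
  "nat \<Rightarrow> (nat \<Rightarrow> bool) \<Rightarrow> nat \<Rightarrow> (nat \<Rightarrow> real) \<Rightarrow> real \<Rightarrow> real
   \<Rightarrow> (nat \<Rightarrow> (nat \<Rightarrow> real^3) \<Rightarrow> (nat \<Rightarrow> real)) \<Rightarrow> (nat \<Rightarrow> real^3) \<Rightarrow> real" where
  "sortlet_ansatz N \<rho> K \<gamma> \<beta>1 \<beta>2 \<alpha> r =
     exp (jastrow N \<rho> \<beta>1 \<beta>2 r) *
     (\<Sum>k<K. sortlet N (\<alpha> k r) * exp (- \<gamma> k * (\<Sum>j<N. norm (r j))))"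

end

theory Submission
  imports Defs
begin

text \<open>The Jastrow factor and the envelope \<open>exp (-\<gamma> \<Sum>|r\<^sub>j|)\<close> are invariant under any
  spin-preserving relabelling \<open>\<sigma>\<close> of the electrons. Permuting the entries of a vector by
  \<open>\<sigma>\<close> replaces its sorting permutation \<open>p\<close> by \<open>\<sigma>\<inverse> \<circ> p\<close> but leaves the sorted values, hence
  the product of consecutive gaps, unchanged; so each sortlet picks up exactly the factor
  \<open>sign \<sigma>\<close>, which is \<open>-1\<close> for a transposition.\<close>

definition sorts :: "nat \<Rightarrow> (nat \<Rightarrow> 'a::linorder) \<Rightarrow> (nat \<Rightarrow> nat) \<Rightarrow> bool" where
  "sorts N a p \<longleftrightarrow> p permutes {0..<N} \<and> (\<forall>i. Suc i < N \<longrightarrow> a (p i) < a (p (Suc i)))"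

lemma permutes_less:
  fixes N :: nat
  assumes "p permutes {0..<N}" "x < N"
  shows "p x < N"
  using permutes_in_image[OF assms(1), of x] assms(2) by simp

lemma sorts_strict_mono:
  assumes "sorts N a p" "i < k" "k < N"
  shows "a (p i) < a (p k)"
  using assms(2,3)
proof (induction k)
  case 0
  then show ?case by simp
next
  case (Suc k)
  have step: "a (p k) < a (p (Suc k))"
    using assms(1) Suc.prems unfolding sorts_def by blast
  show ?case
  proof (cases "i = k")
    case True
    then show ?thesis using step by simp
  next
    case False
    then show ?thesis using Suc step by simp
  qed
qed

lemma sorts_sorted_list:
  assumes "sorts N a p"
  shows "map (\<lambda>i. a (p i)) [0..<N] = sorted_list_of_set (a ` {0..<N})"
proof (rule sorted_distinct_set_unique)
  have "sorted_wrt (<) (map (\<lambda>i. a (p i)) [0..<N])"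
    unfolding sorted_wrt_iff_nth_less using sorts_strict_mono[OF assms] by auto
  then show "sorted (map (\<lambda>i. a (p i)) [0..<N])" "distinct (map (\<lambda>i. a (p i)) [0..<N])"
    by (auto simp: strict_sorted_iff)
  have "p permutes {0..<N}"
    using assms unfolding sorts_def by blast
  have "set (map (\<lambda>i. a (p i)) [0..<N]) = a ` p ` {0..<N}"
    by (simp add: image_image)
  also have "\<dots> = a ` {0..<N}"
    using permutes_image[OF \<open>p permutes {0..<N}\<close>] by simp
  finally show "set (map (\<lambda>i. a (p i)) [0..<N]) = set (sorted_list_of_set (a ` {0..<N}))"
    by simp
qed auto

lemma sorts_unique:
  assumes "inj_on a {0..<N}" "sorts N a p" "sorts N a q"
  shows "p = q"
proof
  fix x
  have p: "p permutes {0..<N}" and q: "q permutes {0..<N}"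
    using assms(2,3) unfolding sorts_def by blast+
  show "p x = q x"
  proof (cases "x < N")
    case True
    have "map (\<lambda>i. a (p i)) [0..<N] = map (\<lambda>i. a (q i)) [0..<N]"
      using sorts_sorted_list[OF assms(2)] sorts_sorted_list[OF assms(3)] by simp
    then have "a (p x) = a (q x)"
      using True by (metis (no_types, lifting) add_0 diff_zero length_upt nth_map nth_upt)
    then show ?thesis
      using assms(1) True permutes_less[OF p] permutes_less[OF q] by (auto dest: inj_onD)
  next
    case False
    then show ?thesis using p q by (simp add: permutes_not_in)
  qed
qed

lemma sorts_exists:
  assumes "inj_on a {0..<N}"
  obtains p where "sorts N a p"
proof -
  let ?xs = "map a [0..<N]"
  obtain p where p: "p permutes {..<length ?xs}" "permute_list p ?xs = sort ?xs"
    using mset_eq_permutation[of "sort ?xs" ?xs] by auto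
  have perm: "p permutes {0..<N}"
    using p(1) by (simp add: lessThan_atLeast0)
  have sorted_nth: "sort ?xs ! i = a (p i)" if "i < N" for i
    using permute_list_nth[OF p(1)] p(2) that permutes_less[OF perm that] by simp
  have "sorted_wrt (<) (sort ?xs)"
    using assms by (simp add: strict_sorted_iff distinct_map)
  then have "a (p i) < a (p (Suc i))" if "Suc i < N" for i
    using sorted_wrt_nth_less[of "(<)" "sort ?xs" i "Suc i"] that sorted_nth[of i] sorted_nth[of "Suc i"]
    by simp
  then show ?thesis
    using that perm unfolding sorts_def by blast
qed

lemma sort_perm_sorts:
  assumes "inj_on a {0..<N}"
  shows "sorts N a (sort_perm N a)"
proof -
  obtain p where p: "sorts N a p"
    using sorts_exists[OF assms] .
  have "sort_perm N a = (THE p. sorts N a p)"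
    by (simp add: sort_perm_def sorts_def)
  also have "\<dots> = p"
    by (rule the_equality[of "sorts N a", OF p]) (rule sorts_unique[OF assms _ p])
  finally show ?thesis
    using p by simp
qed

lemma sortlet_permute:
  assumes \<sigma>: "\<sigma> permutes {0..<N}" and b: "\<And>l. l < N \<Longrightarrow> b l = a (\<sigma> l)"
  shows "sortlet N b = of_int (sign \<sigma>) * sortlet N a"
proof -
  have inj_iff: "inj_on b {0..<N} \<longleftrightarrow> inj_on a {0..<N}"
  proof -
    have "inj_on b {0..<N} \<longleftrightarrow> inj_on (a \<circ> \<sigma>) {0..<N}"
      by (rule inj_on_cong) (simp add: b)
    also have "\<dots> \<longleftrightarrow> inj_on a (\<sigma> ` {0..<N})"
      using permutes_inj_on[OF \<sigma>] by (simp add: comp_inj_on_iff)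
    finally show ?thesis
      using permutes_image[OF \<sigma>] by simp
  qed
  show ?thesis
  proof (cases "inj_on a {0..<N}")
    case False
    then show ?thesis using inj_iff unfolding sortlet_def by simp
  next
    case True
    define p where "p = sort_perm N a"
    have p_sorts: "sorts N a p"
      using sort_perm_sorts[OF True] by (simp add: p_def)
    then have p: "p permutes {0..<N}"
      unfolding sorts_def by blast
    have b_q: "b (inv \<sigma> (p l)) = a (p l)" if "l < N" for l
      using b[OF permutes_less[OF permutes_inv[OF \<sigma>] permutes_less[OF p that]]]
      by (simp add: permutes_inverses[OF \<sigma>])
    have "sorts N b (inv \<sigma> \<circ> p)"
      unfolding sorts_def
    proof (intro conjI allI impI)
      show "inv \<sigma> \<circ> p permutes {0..<N}"
        using p permutes_inv[OF \<sigma>] by (rule permutes_compose)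
      show "b ((inv \<sigma> \<circ> p) l) < b ((inv \<sigma> \<circ> p) (Suc l))" if "Suc l < N" for l
        using that b_q[of l] b_q[of "Suc l"] p_sorts unfolding sorts_def by simp
    qed
    moreover have inj_b: "inj_on b {0..<N}"
      using True inj_iff by simp
    ultimately have sort_perm_b: "sort_perm N b = inv \<sigma> \<circ> p"
      using sorts_unique[OF inj_b sort_perm_sorts] by blast
    have "permutation \<sigma>" "permutation p"
      using \<sigma> p by (auto simp: permutation_permutes)
    then have "sign (inv \<sigma> \<circ> p) = sign \<sigma> * sign p"
      by (simp add: sign_compose sign_inverse permutation_inverse)
    moreover have "(\<Prod>l<N - 1. b ((inv \<sigma> \<circ> p) (Suc l)) - b ((inv \<sigma> \<circ> p) l))
        = (\<Prod>l<N - 1. a (p (Suc l)) - a (p l))"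
      by (rule prod.cong) (auto simp: b_q)
    ultimately show ?thesis
      unfolding sortlet_def using True inj_iff sort_perm_b p_def by simp
  qed
qed

lemma sum_pairs_permute:
  fixes h :: "nat \<Rightarrow> nat \<Rightarrow> 'b::comm_monoid_add"
  assumes \<sigma>: "\<sigma> permutes {0..<N}"
    and P_perm: "\<And>a b. P (\<sigma> a) (\<sigma> b) = P a b"
    and P_sym: "\<And>a b. P a b = P b a"
    and h_sym: "\<And>a b. h a b = h b a"
  shows "(\<Sum>(a,b)\<in>{(a,b). a < b \<and> b < N \<and> P a b}. h (\<sigma> a) (\<sigma> b))
       = (\<Sum>(a,b)\<in>{(a,b). a < b \<and> b < N \<and> P a b}. h a b)"
proof -
  define S where "S = {(a,b). a < b \<and> b < N \<and> P a b}"
  define \<phi> where "\<phi> = (\<lambda>(a,b). (min (\<sigma> a) (\<sigma> b), max (\<sigma> a) (\<sigma> b)))"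
  have inj_\<sigma>: "inj \<sigma>"
    using \<sigma> by (rule permutes_inj)
  have "finite S"
    by (rule finite_subset[of _ "{..<N} \<times> {..<N}"]) (auto simp: S_def)
  moreover have "\<phi> (a,b) \<in> S" if "(a,b) \<in> S" for a b
  proof -
    from that have "a < b" "b < N" "P a b"
      by (auto simp: S_def)
    then have "\<sigma> a \<noteq> \<sigma> b" "\<sigma> a < N" "\<sigma> b < N" "P (\<sigma> a) (\<sigma> b)" "P (\<sigma> b) (\<sigma> a)"
      using injD[OF inj_\<sigma>, of a b] permutes_less[OF \<sigma>] P_perm P_sym by auto
    then show ?thesis
      by (auto simp: S_def \<phi>_def min_def max_def)
  qed
  then have "\<phi> ` S \<subseteq> S"
    by auto
  moreover have "inj_on \<phi> S"
  proof (rule inj_onI)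
    fix x y assume "x \<in> S" "y \<in> S" "\<phi> x = \<phi> y"
    then obtain a b c d where ab: "x = (a,b)" "a < b" and cd: "y = (c,d)" "c < d"
      and "\<phi> (a,b) = \<phi> (c,d)"
      by (auto simp: S_def)
    then have "\<sigma> ` {a,b} = \<sigma> ` {c,d}"
      by (auto simp: \<phi>_def min_def max_def split: if_splits)
    then have "{a,b} = {c,d}"
      by (simp only: inj_image_eq_iff[OF inj_\<sigma>])
    then show "x = y"
      using ab cd by (auto simp: doubleton_eq_iff)
  qed
  ultimately have "\<phi> ` S = S"
    by (rule endo_inj_surj)
  then have "(\<Sum>(a,b)\<in>S. h a b) = (\<Sum>x\<in>S. case_prod h (\<phi> x))"
    using sum.reindex[OF \<open>inj_on \<phi> S\<close>, of "case_prod h"] by simp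
  also have "\<dots> = (\<Sum>(a,b)\<in>S. h (\<sigma> a) (\<sigma> b))"
    by (rule sum.cong) (auto simp: \<phi>_def min_def max_def h_sym)
  finally show ?thesis
    unfolding S_def ..
qed
lemma jastrow_permute:
  assumes \<sigma>: "\<sigma> permutes {0..<N}" and \<rho>: "\<And>a. \<rho> (\<sigma> a) = \<rho> a"
  shows "jastrow N \<rho> \<beta>1 \<beta>2 (r \<circ> \<sigma>) = jastrow N \<rho> \<beta>1 \<beta>2 r"
proof -
  have "(\<Sum>(a,b)\<in>{(a,b). a < b \<and> b < N \<and> \<rho> a = \<rho> b}. (-1/4) * (\<beta>1 / (\<beta>1^2 + norm (r (\<sigma> a) - r (\<sigma> b)))))
      = (\<Sum>(a,b)\<in>{(a,b). a < b \<and> b < N \<and> \<rho> a = \<rho> b}. (-1/4) * (\<beta>1 / (\<beta>1^2 + norm (r a - r b))))"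
    by (rule sum_pairs_permute[OF \<sigma>, where h = "\<lambda>a b. (-1/4) * (\<beta>1 / (\<beta>1^2 + norm (r a - r b)))"])
      (auto simp: \<rho> norm_minus_commute)
  moreover have "(\<Sum>(a,b)\<in>{(a,b). a < b \<and> b < N \<and> \<rho> a \<noteq> \<rho> b}. (-1/2) * (\<beta>2 / (\<beta>2^2 + norm (r (\<sigma> a) - r (\<sigma> b)))))
      = (\<Sum>(a,b)\<in>{(a,b). a < b \<and> b < N \<and> \<rho> a \<noteq> \<rho> b}. (-1/2) * (\<beta>2 / (\<beta>2^2 + norm (r a - r b))))"
    by (rule sum_pairs_permute[OF \<sigma>, where h = "\<lambda>a b. (-1/2) * (\<beta>2 / (\<beta>2^2 + norm (r a - r b)))"])
      (auto simp: \<rho> norm_minus_commute)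
  ultimately show ?thesis
    unfolding jastrow_def by simp
qed

lemma sortlet_ansatz_permute:
  assumes \<sigma>: "\<sigma> permutes {0..<N}" and \<rho>: "\<And>a. \<rho> (\<sigma> a) = \<rho> a"
    and \<alpha>: "\<And>k l. k < K \<Longrightarrow> l < N \<Longrightarrow> \<alpha> k (r \<circ> \<sigma>) l = \<alpha> k r (\<sigma> l)"
  shows "sortlet_ansatz N \<rho> K \<gamma> \<beta>1 \<beta>2 \<alpha> (r \<circ> \<sigma>)
       = of_int (sign \<sigma>) * sortlet_ansatz N \<rho> K \<gamma> \<beta>1 \<beta>2 \<alpha> r"
proof -
  have norms: "(\<Sum>j<N. norm ((r \<circ> \<sigma>) j)) = (\<Sum>j<N. norm (r j))"
    using sum.permute[of \<sigma> "{..<N}" "\<lambda>j. norm (r j)"] \<sigma> by (simp add: atLeast0LessThan)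
  have sortlets: "sortlet N (\<alpha> k (r \<circ> \<sigma>)) = of_int (sign \<sigma>) * sortlet N (\<alpha> k r)" if "k < K" for k
    using sortlet_permute[OF \<sigma>] \<alpha>[OF that] by blast
  have "(\<Sum>k<K. sortlet N (\<alpha> k (r \<circ> \<sigma>)) * exp (- \<gamma> k * (\<Sum>j<N. norm ((r \<circ> \<sigma>) j))))
      = of_int (sign \<sigma>) * (\<Sum>k<K. sortlet N (\<alpha> k r) * exp (- \<gamma> k * (\<Sum>j<N. norm (r j))))"
    unfolding norms sum_distrib_left by (rule sum.cong) (simp_all add: sortlets)
  then show ?thesis
    unfolding sortlet_ansatz_def jastrow_permute[of \<sigma> N \<rho>, OF \<sigma> \<rho>] by simp
qed

theorem mainTheorem1:
  fixes N K :: nat and \<rho> :: "nat \<Rightarrow> bool" and \<gamma> :: "nat \<Rightarrow> real"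
    and \<beta>1 \<beta>2 :: real and \<alpha> :: "nat \<Rightarrow> (nat \<Rightarrow> real^3) \<Rightarrow> (nat \<Rightarrow> real)"
  assumes "N \<ge> 2" and "K \<ge> 1" and "\<beta>1 \<noteq> 0" and "\<beta>2 \<noteq> 0"
    and equivariant: "\<And>k i j r l. k < K \<Longrightarrow> i < N \<Longrightarrow> j < N \<Longrightarrow> i \<noteq> j \<Longrightarrow> \<rho> i = \<rho> j \<Longrightarrow>
        r \<in> config N \<Longrightarrow> l < N \<Longrightarrow>
        \<alpha> k (swap_conf i j r) l = \<alpha> k r (Transposition.transpose i j l)"
  assumes "r \<in> config N" and "i < N" and "j < N" and "i \<noteq> j" and "\<rho> i = \<rho> j"
  shows "sortlet_ansatz N \<rho> K \<gamma> \<beta>1 \<beta>2 \<alpha> (swap_conf i j r) = - sortlet_ansatz N \<rho> K \<gamma> \<beta>1 \<beta>2 \<alpha> r"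
proof -
  let ?\<tau> = "Transposition.transpose i j"
  have \<tau>: "?\<tau> permutes {0..<N}"
    using \<open>i < N\<close> \<open>j < N\<close> by (simp add: permutes_swap_id)
  have \<rho>: "\<rho> (?\<tau> a) = \<rho> a" for a
    using \<open>\<rho> i = \<rho> j\<close> by (simp add: Transposition.transpose_def)
  have \<alpha>: "\<alpha> k (r \<circ> ?\<tau>) l = \<alpha> k r (?\<tau> l)" if "k < K" "l < N" for k l
    using equivariant[OF that(1) \<open>i < N\<close> \<open>j < N\<close> \<open>i \<noteq> j\<close> \<open>\<rho> i = \<rho> j\<close> \<open>r \<in> config N\<close> that(2)]
    by (simp add: swap_conf_def)
  have "sortlet_ansatz N \<rho> K \<gamma> \<beta>1 \<beta>2 \<alpha> (r \<circ> ?\<tau>)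
      = of_int (sign ?\<tau>) * sortlet_ansatz N \<rho> K \<gamma> \<beta>1 \<beta>2 \<alpha> r"
    using \<tau> \<rho> \<alpha> by (rule sortlet_ansatz_permute)
  then show ?thesis
    using \<open>i \<noteq> j\<close> by (simp add: swap_conf_def sign_swap_id)
qed

end
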